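(* Let $k$ be a non-archimedean local field of residue characteristic $2$. Let $B(x)=x_1^2-\Delta x_2^2$ on $k^2$, where $|\Delta|=|\varpi|$. Let $z=q^{-\beta}$, $w=zq^{-1}$, and $t\in\mathfrak o\setminus\{0\}$ with $|t|=q^{-T}$. Then \[ X^B(\beta;t^2)=|2|\,\frac{1+w^{2T+e+1}}{1-w}. \]
   Context: $k$ has ring of integers $\mathfrak o$, uniformizer $\varpi$, residue field of cardinality $q$, absolute value normalized by $|\varpi|=q^{-1}$, and $e=\operatorname{ord}(2)$ is the ramification index. On $\mathfrak o^n$ use the additive Haar measure of total mass $1$. For a quadratic form $B$ on $k^n$, $\rho\in\mathfrak o$ and integer $\ell\ge0$: $X_\ell^B(\rho)=\operatorname{meas}\{x\in\mathfrak o^n: B(x)-\rho\in 2\varpi^\ell\mathfrak o\}$ and $X^B(\beta;\rho)=\sum_{\ell\ge0}z^\ell X_\ell^B(\rho)$ with $z=q^{-\beta}$. *)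

theory Defs
  imports "HOL-Probability.Probability"
begin

definition nonarch_abs :: "('a::field \<Rightarrow> real) \<Rightarrow> bool" where
  "nonarch_abs v \<longleftrightarrow> (\<forall>x. 0 \<le> v x) \<and> (\<forall>x. v x = 0 \<longleftrightarrow> x = 0)
     \<and> (\<forall>x y. v (x * y) = v x * v y) \<and> (\<forall>x y. v (x + y) \<le> max (v x) (v y))"

definition int_ring :: "('a::field \<Rightarrow> real) \<Rightarrow> 'a set" where
  "int_ring v = {x. v x \<le> 1}"

text \<open>Residue field o / p, as the quotient of o by congruence modulo the maximal ideal.\<close>
definition residue_field :: "('a::field \<Rightarrow> real) \<Rightarrow> 'a set set" where
  "residue_field v = int_ring v // {(x, y). x \<in> int_ring v \<and> y \<in> int_ring v \<and> v (x - y) < 1}"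

definition residue_card :: "('a::field \<Rightarrow> real) \<Rightarrow> nat" where
  "residue_card v = card (residue_field v)"

definition nonarch_local_field :: "('a::field \<Rightarrow> real) \<Rightarrow> 'a \<Rightarrow> bool" where
  "nonarch_local_field v \<pi> \<longleftrightarrow> nonarch_abs v
     \<and> 0 < v \<pi> \<and> v \<pi> < 1
     \<and> (\<forall>x. x \<noteq> 0 \<longrightarrow> (\<exists>n::int. v x = v \<pi> powi n))
     \<and> finite (residue_field v)
     \<and> v \<pi> = 1 / real (residue_card v)
     \<and> (\<forall>X::nat \<Rightarrow> 'a. (\<forall>\<epsilon>>0. \<exists>N. \<forall>m\<ge>N. \<forall>n\<ge>N. v (X m - X n) < \<epsilon>)
            \<longrightarrow> (\<exists>L. \<forall>\<epsilon>>0. \<exists>N. \<forall>n\<ge>N. v (X n - L) < \<epsilon>))"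

definition box2 :: "('a::field \<Rightarrow> real) \<Rightarrow> 'a \<times> 'a \<Rightarrow> real \<Rightarrow> ('a \<times> 'a) set" where
  "box2 v c r = {x. v (fst x - fst c) \<le> r \<and> v (snd x - snd c) \<le> r}"

definition transl2 :: "'a::field \<times> 'a \<Rightarrow> 'a \<times> 'a \<Rightarrow> 'a \<times> 'a" where
  "transl2 a x = (fst x + fst a, snd x + snd a)"

definition haar_o2 :: "('a::field \<Rightarrow> real) \<Rightarrow> 'a \<Rightarrow> ('a \<times> 'a) measure \<Rightarrow> bool" where
  "haar_o2 v \<pi> \<mu> \<longleftrightarrow> prob_space \<mu> \<and> space \<mu> = int_ring v \<times> int_ring v
     \<and> (\<forall>c \<in> int_ring v \<times> int_ring v. \<forall>m::nat. box2 v c (v \<pi> ^ m) \<in> sets \<mu>)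
     \<and> (\<forall>A \<in> sets \<mu>. \<forall>a \<in> int_ring v \<times> int_ring v.
          transl2 a ` A \<in> sets \<mu> \<and> measure \<mu> (transl2 a ` A) = measure \<mu> A)"

definition X_l :: "('a::field \<Rightarrow> real) \<Rightarrow> 'a \<Rightarrow> ('a \<times> 'a) measure \<Rightarrow> ('a \<times> 'a \<Rightarrow> 'a)
    \<Rightarrow> 'a \<Rightarrow> nat \<Rightarrow> real" where
  "X_l v \<pi> \<mu> B \<rho> l = measure \<mu> {x \<in> int_ring v \<times> int_ring v.
       \<exists>y \<in> int_ring v. B x - \<rho> = 2 * \<pi> ^ l * y}"

definition X_gen :: "('a::field \<Rightarrow> real) \<Rightarrow> 'a \<Rightarrow> ('a \<times> 'a) measure \<Rightarrow> ('a \<times> 'a \<Rightarrow> 'a)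
    \<Rightarrow> complex \<Rightarrow> 'a \<Rightarrow> complex" where
  "X_gen v \<pi> \<mu> B \<beta> \<rho> =
     (\<Sum>l. (of_real (real (residue_card v)) powr (- \<beta>)) ^ l * of_real (X_l v \<pi> \<mu> B \<rho> l))"

end

theory Submission
  imports Defs
begin

text \<open>
  Write \<open>N(x) = x\<^sub>1\<^sup>2 - \<Delta> x\<^sub>2\<^sup>2\<close>. Since \<open>2\<pi>\<^sup>l\<O> = {y. |y| \<le> q\<^sup>-\<^sup>(\<^sup>l\<^sup>+\<^sup>e\<^sup>)}\<close>, the
  coefficient \<open>X\<^sub>l\<close> is the measure of \<open>S\<^sub>m = {x \<in> \<O>\<^sup>2. |N(x) - t\<^sup>2| \<le> q\<^sup>-\<^sup>m}\<close> with \<open>m = l + e\<close>,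
  and we show \<open>meas S\<^sub>m = q\<^sup>-\<^sup>m\<close> for \<open>m \<le> 2T + 2e\<close> and \<open>meas S\<^sub>m = 2 q\<^sup>-\<^sup>m\<close> beyond; summing the
  two geometric series gives the formula.

  Because \<open>|\<Delta>|\<close> is an odd power of \<open>q\<^sup>-\<^sup>1\<close>, \<open>|N(x)| = max |x\<^sub>1|\<^sup>2 (q\<^sup>-\<^sup>1 |x\<^sub>2|\<^sup>2)\<close>. For
  \<open>m \<le> 2T\<close> this makes \<open>S\<^sub>m\<close> a box around \<open>0\<close>. For \<open>m > 2T\<close>, \<open>x = t y\<close> with \<open>y\<^sub>1 = 1 + z\<close> and
  \<open>2z + z\<^sup>2 \<equiv> \<Delta> y\<^sub>2\<^sup>2\<close>; as \<open>2z + z\<^sup>2\<close> has no odd valuation below \<open>2e\<close>, \<open>y\<^sub>2\<close> and \<open>z\<close> are forced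
  to be small, and up to \<open>m = 2T + 2e\<close> the set \<open>S\<^sub>m\<close> is a box around \<open>(t, 0)\<close>. Beyond that,
  over each small ball of second coordinates Newton's method produces square roots \<open>\<plusminus>s\<close>
  of \<open>t\<^sup>2 + \<Delta> x\<^sub>2\<^sup>2\<close>, and \<open>S\<^sub>m\<close> is the union of two disjoint boxes around them. Box measures
  follow from translation invariance, since a box splits into \<open>q\<close> translates of the next one.
\<close>

section \<open>Valuations\<close>

locale local_field =
  fixes v :: "'a::field \<Rightarrow> real" and \<pi> :: 'a
  assumes local_field: "nonarch_local_field v \<pi>"
begin

abbreviation vpi :: real where "vpi \<equiv> v \<pi>"
abbreviation int_ring_v :: "'a set" ("\<O>") where "\<O> \<equiv> int_ring v"

lemma val_nonneg: "0 \<le> v x"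
  and val_eq_0_iff: "v x = 0 \<longleftrightarrow> x = 0"
  and val_mult: "v (x * y) = v x * v y"
  and val_add_le_max: "v (x + y) \<le> max (v x) (v y)"
  using local_field unfolding nonarch_local_field_def nonarch_abs_def by auto

lemma vpi_pos: "0 < vpi"
  and vpi_less_1: "vpi < 1"
  and val_discrete: "x \<noteq> 0 \<Longrightarrow> \<exists>n::int. v x = vpi powi n"
  and finite_residue_field: "finite (residue_field v)"
  and vpi_eq: "vpi = 1 / real (residue_card v)"
  using local_field unfolding nonarch_local_field_def by auto

lemma int_ring_iff: "x \<in> \<O> \<longleftrightarrow> v x \<le> 1"
  unfolding int_ring_def by simp

lemma val_0 [simp]: "v 0 = 0"
  using val_eq_0_iff by simp

lemma val_1 [simp]: "v 1 = 1"
  using val_mult[of 1 1] val_eq_0_iff[of 1] by simp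

lemma val_minus [simp]: "v (- x) = v x"
proof -
  have "v (-1) * v (-1) = 1"
    using val_mult[of "-1" "-1"] by simp
  then have "v (-1) = 1"
    using val_nonneg[of "-1"] by (metis abs_of_nonneg abs_square_eq_1 power2_eq_square)
  then show ?thesis
    using val_mult[of "-1" x] by simp
qed

lemma zero_in_int_ring [simp]: "0 \<in> \<O>"
  by (simp add: int_ring_iff)

lemma val_diff_commute: "v (x - y) = v (y - x)"
  by (metis minus_diff_eq val_minus)

lemma val_power: "v (x ^ n) = v x ^ n"
  by (induction n) (auto simp: val_mult)

lemma val_divide: "v (x / y) = v x / v y"
proof (cases "y = 0")
  case False
  then show ?thesis
    using val_mult[of "x / y" y] val_eq_0_iff[of y] by (simp add: field_simps)
qed simp

lemma val_add_le: "v x \<le> c \<Longrightarrow> v y \<le> c \<Longrightarrow> v (x + y) \<le> c"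
  using val_add_le_max[of x y] by linarith

lemma val_diff_le: "v x \<le> c \<Longrightarrow> v y \<le> c \<Longrightarrow> v (x - y) \<le> c"
  using val_add_le[of x c "- y"] by simp

lemma val_add_eq_max:
  assumes "v x \<noteq> v y"
  shows "v (x + y) = max (v x) (v y)"
proof -
  have "v x \<le> max (v (x + y)) (v y)" "v y \<le> max (v (x + y)) (v x)"
    using val_add_le_max[of "x + y" "- y"] val_add_le_max[of "x + y" "- x"] by simp_all
  then show ?thesis
    using val_add_le_max[of x y] assms by linarith
qed

lemma val_diff_eq_max: "v x \<noteq> v y \<Longrightarrow> v (x - y) = max (v x) (v y)"
  using val_add_eq_max[of x "- y"] by simp

lemma pi_neq_0 [simp]: "\<pi> \<noteq> 0"
  using vpi_pos by auto

lemma vpi_power_pos: "0 < vpi ^ n"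
  using vpi_pos by simp

lemma vpi_nonneg [simp]: "0 \<le> vpi"
  using vpi_pos by simp

lemma vpi_neq_0 [simp]: "vpi \<noteq> 0"
  using vpi_pos by simp

lemma vpi_power_le_1: "vpi ^ n \<le> 1"
  using vpi_pos vpi_less_1 by (simp add: power_le_one)

lemma vpi_power_le_iff [simp]: "vpi ^ m \<le> vpi ^ n \<longleftrightarrow> n \<le> m"
  and vpi_power_less_iff [simp]: "vpi ^ m < vpi ^ n \<longleftrightarrow> n < m"
  using vpi_pos vpi_less_1 by simp_all

lemma vpi_power_eq_iff [simp]: "vpi ^ m = vpi ^ n \<longleftrightarrow> m = n"
  by (metis order.eq_iff vpi_power_le_iff)

lemma val_le_vpi_power_mono: "v x \<le> vpi ^ n \<Longrightarrow> m \<le> n \<Longrightarrow> v x \<le> vpi ^ m"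
  using vpi_power_le_iff[of n m] by linarith

lemma val_mult_le_vpi_power:
  "v x \<le> vpi ^ m \<Longrightarrow> v y \<le> vpi ^ n \<Longrightarrow> v (x * y) \<le> vpi ^ (m + n)"
  by (simp add: val_mult power_add mult_mono val_nonneg vpi_power_pos less_imp_le)

lemma val_square_le_vpi_power: "v x \<le> vpi ^ n \<Longrightarrow> v (x ^ 2) \<le> vpi ^ (2 * n)"
  using val_mult_le_vpi_power[of x n x n] by (simp add: power2_eq_square mult_2)

lemma vpi_power_square: "(vpi ^ a) ^ 2 = vpi ^ (2 * a)"
  by (metis mult.commute power_mult)

lemma int_ring_val_eq_vpi_power:
  assumes "x \<in> \<O>" "x \<noteq> 0"
  obtains k where "v x = vpi ^ k"
proof -
  obtain n :: int where n: "v x = vpi powi n"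
    using val_discrete assms(2) by auto
  have "0 \<le> n"
  proof (rule ccontr)
    assume "\<not> 0 \<le> n"
    then have "vpi powi n = inverse (vpi ^ nat (- n))"
      by (simp add: power_int_def power_inverse)
    moreover have "vpi ^ nat (- n) < 1"
      using \<open>\<not> 0 \<le> n\<close> vpi_pos vpi_less_1 by (simp add: power_less_one_iff)
    ultimately have "1 < v x"
      using n vpi_pos by (simp add: one_less_inverse)
    then show False
      using assms(1) by (simp add: int_ring_iff)
  qed
  then show ?thesis
    using n that by (metis nonneg_int_cases power_int_of_nat)
qed

lemma val_less_1_imp_le_vpi:
  assumes "v x < 1"
  shows "v x \<le> vpi"
proof (cases "x = 0")
  case False
  then obtain k where k: "v x = vpi ^ k"
    using assms int_ring_val_eq_vpi_power[of x] by (force simp: int_ring_iff)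
  with assms have "k \<noteq> 0"
    by (cases k) auto
  with k show ?thesis
    using vpi_power_le_iff[of k 1] by simp
qed simp

lemma val_square_le_vpi_power_iff:
  assumes "x \<in> \<O>"
  shows "v x ^ 2 \<le> vpi ^ m \<longleftrightarrow> v x \<le> vpi ^ ((m + 1) div 2)"
proof (cases "x = 0")
  case False
  then obtain a where a: "v x = vpi ^ a"
    using int_ring_val_eq_vpi_power assms by blast
  have "v x ^ 2 \<le> vpi ^ m \<longleftrightarrow> m \<le> 2 * a"
    using a by (simp add: vpi_power_square)
  also have "\<dots> \<longleftrightarrow> (m + 1) div 2 \<le> a"
    by presburger
  finally show ?thesis
    using a by simp
qed simp

lemma vpi_mult_val_square_le_vpi_power_iff:
  assumes "x \<in> \<O>"
  shows "vpi * v x ^ 2 \<le> vpi ^ m \<longleftrightarrow> v x \<le> vpi ^ (m div 2)"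
proof (cases "x = 0")
  case False
  then obtain a where a: "v x = vpi ^ a"
    using int_ring_val_eq_vpi_power assms by blast
  have "vpi * v x ^ 2 = vpi ^ Suc (2 * a)"
    using a by (simp add: vpi_power_square)
  then have "vpi * v x ^ 2 \<le> vpi ^ m \<longleftrightarrow> m \<le> Suc (2 * a)"
    by (simp only: vpi_power_le_iff)
  also have "\<dots> \<longleftrightarrow> m div 2 \<le> a"
    by presburger
  finally show ?thesis
    using a by simp
qed simp

text \<open>Even and odd powers of \<open>vpi\<close> never coincide.\<close>
lemma val_square_neq_vpi_mult_val_square:
  assumes "x \<in> \<O>" "y \<in> \<O>" "x \<noteq> 0 \<or> y \<noteq> 0"
  shows "v x ^ 2 \<noteq> vpi * v y ^ 2"
proof (cases "x = 0 \<or> y = 0")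
  case True
  with assms(3) consider "x = 0" "y \<noteq> 0" | "y = 0" "x \<noteq> 0"
    by blast
  then show ?thesis
    using vpi_pos by cases (simp_all add: val_eq_0_iff)
next
  case False
  then obtain a b where a: "v x = vpi ^ a" and b: "v y = vpi ^ b"
    using int_ring_val_eq_vpi_power assms by metis
  have "2 * a \<noteq> Suc (2 * b)"
    by presburger
  moreover have "v x ^ 2 = vpi ^ (2 * a)" "vpi * v y ^ 2 = vpi ^ Suc (2 * b)"
    using a b by (simp_all add: vpi_power_square)
  ultimately show ?thesis
    by (metis vpi_power_eq_iff)
qed

lemma residue_card_eq: "real (residue_card v) = 1 / vpi"
proof -
  have "real (residue_card v) \<noteq> 0"
    using vpi_eq vpi_pos by auto
  then show ?thesis
    using vpi_eq by simp
qed

lemma residue_card_gt_1: "1 < real (residue_card v)"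
  using vpi_pos vpi_less_1 by (simp add: residue_card_eq)

definition residue_rel :: "('a \<times> 'a) set" where
  "residue_rel = {(x, y). x \<in> \<O> \<and> y \<in> \<O> \<and> v (x - y) < 1}"

lemma residue_field_eq_quotient: "residue_field v = \<O> // residue_rel"
  unfolding residue_field_def residue_rel_def by simp

lemma equiv_residue_rel: "equiv \<O> residue_rel"
proof (rule equivI)
  show "residue_rel \<subseteq> \<O> \<times> \<O>" "refl_on \<O> residue_rel" "sym residue_rel"
    unfolding residue_rel_def refl_on_def sym_def using val_diff_commute by auto
  show "trans residue_rel"
  proof (rule transI)
    fix x y z assume "(x, y) \<in> residue_rel" "(y, z) \<in> residue_rel"
    moreover have "v (x - z) \<le> max (v (x - y)) (v (y - z))"
      using val_add_le_max[of "x - y" "y - z"] by simp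
    ultimately show "(x, z) \<in> residue_rel"
      unfolding residue_rel_def by auto
  qed
qed

lemma residue_reps_exist:
  "\<exists>R. finite R \<and> card R = residue_card v \<and> R \<subseteq> \<O> \<and> (\<forall>y\<in>\<O>. \<exists>r\<in>R. v (y - r) < 1)
     \<and> (\<forall>r\<in>R. \<forall>r'\<in>R. v (r - r') < 1 \<longrightarrow> r = r')"
proof -
  define rep where "rep C = (SOME x. x \<in> C)" for C :: "'a set"
  have rep: "rep C \<in> C" "rep C \<in> \<O>" "residue_rel `` {rep C} = C"
    if C: "C \<in> residue_field v" for C
  proof -
    obtain x where x: "x \<in> \<O>" "C = residue_rel `` {x}"
      using C unfolding residue_field_eq_quotient by (blast elim: quotientE)
    then have "x \<in> C"
      using equiv_class_self[OF equiv_residue_rel] by simp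
    then show "rep C \<in> C"
      unfolding rep_def by (rule someI)
    then have "(x, rep C) \<in> residue_rel"
      using x(2) by simp
    then show "rep C \<in> \<O>"
      by (simp add: residue_rel_def)
    from \<open>(x, rep C) \<in> residue_rel\<close> have "residue_rel `` {x} = residue_rel `` {rep C}"
      by (rule equiv_class_eq[OF equiv_residue_rel])
    with x(2) show "residue_rel `` {rep C} = C"
      by metis
  qed
  have class_eq: "C = D"
    if C: "C \<in> residue_field v" and D: "D \<in> residue_field v" and "v (rep C - rep D) < 1" for C D
  proof -
    have "(rep C, rep D) \<in> residue_rel"
      using rep(2)[OF C] rep(2)[OF D] \<open>v (rep C - rep D) < 1\<close> by (simp add: residue_rel_def)
    then have "residue_rel `` {rep C} = residue_rel `` {rep D}"
      by (rule equiv_class_eq[OF equiv_residue_rel])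
    then show "C = D"
      using rep(3)[OF C] rep(3)[OF D] by argo
  qed
  have "inj_on rep (residue_field v)"
  proof (rule inj_onI)
    fix C D assume "C \<in> residue_field v" "D \<in> residue_field v" "rep C = rep D"
    then show "C = D"
      using class_eq[of C D] by simp
  qed
  show ?thesis
  proof (intro exI[of _ "rep ` residue_field v"] conjI ballI impI)
    show "finite (rep ` residue_field v)"
      using finite_residue_field by simp
    show "card (rep ` residue_field v) = residue_card v"
      unfolding residue_card_def by (rule card_image) fact
    show "rep ` residue_field v \<subseteq> \<O>"
      using rep(2) by auto
  next
    fix y assume "y \<in> \<O>"
    then have C: "residue_rel `` {y} \<in> residue_field v"
      unfolding residue_field_eq_quotient by (rule quotientI)
    then have "(y, rep (residue_rel `` {y})) \<in> residue_rel"
      using rep(1)[OF C] by simp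
    then show "\<exists>r \<in> rep ` residue_field v. v (y - r) < 1"
      using C unfolding residue_rel_def by auto
  next
    fix r r' assume "r \<in> rep ` residue_field v" "r' \<in> rep ` residue_field v" "v (r - r') < 1"
    then obtain C D where "C \<in> residue_field v" "D \<in> residue_field v" "r = rep C" "r' = rep D"
      by blast
    then show "r = r'"
      using class_eq[of C D] \<open>v (r - r') < 1\<close> by simp
  qed
qed

definition residue_reps :: "'a set" where
  "residue_reps = (SOME R. finite R \<and> card R = residue_card v \<and> R \<subseteq> \<O>
     \<and> (\<forall>y\<in>\<O>. \<exists>r\<in>R. v (y - r) < 1) \<and> (\<forall>r\<in>R. \<forall>r'\<in>R. v (r - r') < 1 \<longrightarrow> r = r'))"

lemma
  shows finite_residue_reps: "finite residue_reps"
    and card_residue_reps: "card residue_reps = residue_card v"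
    and residue_reps_subset: "residue_reps \<subseteq> \<O>"
    and residue_reps_cover: "y \<in> \<O> \<Longrightarrow> \<exists>r\<in>residue_reps. v (y - r) < 1"
    and residue_reps_distinct: "r \<in> residue_reps \<Longrightarrow> r' \<in> residue_reps \<Longrightarrow> v (r - r') < 1 \<Longrightarrow> r = r'"
  using someI_ex[OF residue_reps_exist] unfolding residue_reps_def[symmetric] by blast+

definition vball :: "'a \<Rightarrow> nat \<Rightarrow> 'a set" where
  "vball a n = {y. v (y - a) \<le> vpi ^ n}"

lemma vball_subset_int_ring:
  assumes "a \<in> \<O>"
  shows "vball a n \<subseteq> \<O>"
proof
  fix y assume "y \<in> vball a n"
  then have "v ((y - a) + a) \<le> 1"
    using assms vpi_power_le_1[of n] unfolding vball_def int_ring_iff by (intro val_add_le) auto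
  then show "y \<in> \<O>"
    by (simp add: int_ring_iff)
qed

lemma subdivision_center_in_int_ring:
  assumes "a \<in> \<O>" "r \<in> residue_reps"
  shows "a + \<pi> ^ n * r \<in> \<O>"
proof -
  have "v r \<le> 1"
    using assms(2) residue_reps_subset by (auto simp: int_ring_iff)
  then have "v (\<pi> ^ n * r) \<le> 1"
    using vpi_power_le_1[of n] by (simp add: val_mult val_power val_nonneg mult_le_one)
  with assms(1) show ?thesis
    unfolding int_ring_iff by (intro val_add_le) auto
qed

lemma vball_eq_UN_vball:
  assumes "a \<in> \<O>"
  shows "vball a n = (\<Union>r\<in>residue_reps. vball (a + \<pi> ^ n * r) (Suc n))"
proof (intro equalityI subsetI)
  fix y assume "y \<in> vball a n"
  define w where "w = (y - a) / \<pi> ^ n"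
  have "v w \<le> 1"
    using \<open>y \<in> vball a n\<close> vpi_power_pos[of n] unfolding w_def vball_def by (simp add: val_divide val_power)
  then obtain r where r: "r \<in> residue_reps" "v (w - r) < 1"
    using residue_reps_cover int_ring_iff by blast
  have "y - (a + \<pi> ^ n * r) = \<pi> ^ n * (w - r)"
    unfolding w_def by (simp add: field_simps)
  then have "v (y - (a + \<pi> ^ n * r)) \<le> vpi ^ n * vpi"
    using val_less_1_imp_le_vpi[OF r(2)] vpi_power_pos[of n] by (simp add: val_mult val_power)
  then show "y \<in> (\<Union>r\<in>residue_reps. vball (a + \<pi> ^ n * r) (Suc n))"
    unfolding vball_def using r by (auto simp: mult.commute)
next
  fix y assume "y \<in> (\<Union>r\<in>residue_reps. vball (a + \<pi> ^ n * r) (Suc n))"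
  then obtain r where r: "r \<in> residue_reps" "v (y - (a + \<pi> ^ n * r)) \<le> vpi ^ Suc n"
    unfolding vball_def by auto
  have "v (\<pi> ^ n * r) \<le> vpi ^ n"
    using r(1) residue_reps_subset val_mult_le_vpi_power[of "\<pi> ^ n" n r 0]
    by (auto simp: val_power int_ring_iff)
  moreover have "vpi ^ Suc n \<le> vpi ^ n"
    by (simp del: power_Suc)
  ultimately have "v ((y - (a + \<pi> ^ n * r)) + \<pi> ^ n * r) \<le> vpi ^ n"
    using r(2) by (intro val_add_le) auto
  then show "y \<in> vball a n"
    unfolding vball_def by simp
qed

lemma vball_subdivision_disjoint:
  assumes "r \<in> residue_reps" "r' \<in> residue_reps"
    and "y \<in> vball (a + \<pi> ^ n * r) (Suc n)" "y \<in> vball (a + \<pi> ^ n * r') (Suc n)"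
  shows "r = r'"
proof -
  have "v ((y - (a + \<pi> ^ n * r')) - (y - (a + \<pi> ^ n * r))) \<le> vpi ^ Suc n"
    using assms(3,4) unfolding vball_def by (simp only: mem_Collect_eq val_diff_le)
  moreover have "(y - (a + \<pi> ^ n * r')) - (y - (a + \<pi> ^ n * r)) = \<pi> ^ n * (r - r')"
    by (simp add: algebra_simps)
  ultimately have "vpi ^ n * v (r - r') \<le> vpi ^ n * vpi"
    by (simp add: val_mult val_power mult.commute)
  then have "v (r - r') < 1"
    using vpi_power_pos[of n] vpi_less_1 by simp
  then show ?thesis
    using residue_reps_distinct assms(1,2) by blast
qed

lemma val_mult_add_le_iff:
  assumes w: "v w = vpi ^ c" and c: "c < n"
  shows "v (z * (z + w)) \<le> vpi ^ (n + c) \<longleftrightarrow> v z \<le> vpi ^ n \<or> v (z + w) \<le> vpi ^ n"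
proof
  have "vpi ^ n \<le> vpi ^ c"
    using c by simp
  assume h: "v (z * (z + w)) \<le> vpi ^ (n + c)"
  then have h': "v z * v (z + w) \<le> vpi ^ n * vpi ^ c"
    by (simp add: val_mult power_add)
  consider "vpi ^ c < v z" | "v z < vpi ^ c" | "v z = vpi ^ c"
    by linarith
  then show "v z \<le> vpi ^ n \<or> v (z + w) \<le> vpi ^ n"
  proof cases
    case 1
    then have "v z * v z \<le> vpi ^ n * vpi ^ c"
      using val_add_eq_max[of z w] w h' by simp
    moreover have "vpi ^ c * vpi ^ c < v z * v z"
      using 1 vpi_power_pos[of c] by (simp add: mult_strict_mono)
    moreover have "vpi ^ n * vpi ^ c \<le> vpi ^ c * vpi ^ c"
      using \<open>vpi ^ n \<le> vpi ^ c\<close> vpi_power_pos[of c] by simp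
    ultimately show ?thesis
      using h' by linarith
  next
    case 2
    then have "v (z + w) = vpi ^ c"
      using val_add_eq_max[of z w] w by simp
    then show ?thesis
      using h' vpi_power_pos[of c] by simp
  next
    case 3
    then show ?thesis
      using h' vpi_power_pos[of c] by (simp add: mult.commute)
  qed
next
  have small: "vpi ^ n \<le> vpi ^ c"
    using c by simp
  assume "v z \<le> vpi ^ n \<or> v (z + w) \<le> vpi ^ n"
  then show "v (z * (z + w)) \<le> vpi ^ (n + c)"
  proof
    assume z: "v z \<le> vpi ^ n"
    then have "v z \<le> vpi ^ c"
      using small by linarith
    then have "v (z + w) \<le> vpi ^ c"
      using w by (intro val_add_le) auto
    with z show ?thesis
      using val_mult_le_vpi_power by blast
  next
    assume zw: "v (z + w) \<le> vpi ^ n"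
    then have "v (z + w) \<le> vpi ^ c"
      using small by linarith
    then have "v ((z + w) - w) \<le> vpi ^ c"
      using w by (intro val_diff_le) auto
    with zw show ?thesis
      using val_mult_le_vpi_power[of z c "z + w" n] by (simp add: add.commute)
  qed
qed

lemma val_eq_of_val_diff_less: "v (s - t) < v t \<Longrightarrow> v s = v t"
  using val_add_eq_max[of "s - t" t] by simp

lemma val_eq_of_val_diff_le:
  assumes "v t = vpi ^ k" "v (s - t) \<le> vpi ^ n" "k < n"
  shows "v s = vpi ^ k"
proof -
  have "v (s - t) < v t"
    using assms vpi_power_less_iff[of n k] by linarith
  from val_eq_of_val_diff_less[OF this] show ?thesis
    using assms(1) by simp
qed

lemma residue_card_powr_neg: "real (residue_card v) powr (- real n) = vpi ^ n"
proof -
  have "real (residue_card v) powr (- real n) = inverse (real (residue_card v) ^ n)"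
    using residue_card_gt_1 by (simp add: powr_minus powr_realpow)
  then show ?thesis
    by (simp add: residue_card_eq power_one_over)
qed

end

section \<open>Dyadic fields: the quadratic \<open>2z + z\<^sup>2\<close> and Newton's method\<close>

locale dyadic_local_field = local_field +
  fixes e :: nat
  assumes val_two: "v 2 = vpi ^ e"
begin

lemma two_neq_0: "(2::'a) \<noteq> 0"
proof
  assume "(2::'a) = 0"
  then have "v 2 = 0"
    by simp
  with val_two vpi_power_pos[of e] show False
    by linarith
qed

lemma val_two_mult_add_square:
  assumes "v z = vpi ^ k" "k < e"
  shows "v (2 * z + z ^ 2) = vpi ^ (2 * k)"
proof -
  have "v (2 * z) = vpi ^ (e + k)" "v (z ^ 2) = vpi ^ (2 * k)"
    using assms(1) by (simp_all add: val_two val_mult val_power power_add vpi_power_square)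
  moreover have "vpi ^ (e + k) < vpi ^ (2 * k)"
    using assms(2) by simp
  ultimately show ?thesis
    using val_add_eq_max[of "2 * z" "z ^ 2"] by simp
qed

lemma val_two_mult_add_square_le:
  assumes "v z \<le> vpi ^ e"
  shows "v (2 * z + z ^ 2) \<le> vpi ^ (2 * e)"
proof (rule val_add_le)
  show "v (2 * z) \<le> vpi ^ (2 * e)"
    using val_mult_le_vpi_power[of 2 e z e] assms by (simp add: val_two mult_2[of e])
  show "v (z ^ 2) \<le> vpi ^ (2 * e)"
    using val_square_le_vpi_power[OF assms] .
qed

text \<open>This is what forces solutions of \<open>x\<^sub>1\<^sup>2 - \<Delta> x\<^sub>2\<^sup>2 \<equiv> 1\<close> to have \<open>x\<^sub>2\<close> small.\<close>
lemma val_two_mult_add_square_neq_odd: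
  assumes "z \<in> \<O>" "odd r" "r < 2 * e"
  shows "v (2 * z + z ^ 2) \<noteq> vpi ^ r"
proof (cases "z = 0")
  case False
  then obtain k where k: "v z = vpi ^ k"
    using int_ring_val_eq_vpi_power assms(1) by blast
  show ?thesis
  proof (cases "k < e")
    case True
    have "2 * k \<noteq> r"
      using assms(2) by presburger
    then show ?thesis
      using val_two_mult_add_square[OF k True] by simp
  next
    case False
    then have "v (2 * z + z ^ 2) \<le> vpi ^ (2 * e)"
      using k by (intro val_two_mult_add_square_le) simp
    moreover have "vpi ^ (2 * e) < vpi ^ r"
      using assms(3) by simp
    ultimately show ?thesis
      by linarith
  qed
next
  case True
  then have "v (2 * z + z ^ 2) = 0"
    by simp
  then show ?thesis
    using vpi_power_pos[of r] by linarith
qed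

lemma val_le_of_two_mult_add_square_le:
  assumes "z \<in> \<O>" "j \<le> 2 * e" "v (2 * z + z ^ 2) \<le> vpi ^ j"
  shows "v z \<le> vpi ^ ((j + 1) div 2)"
proof (cases "z = 0")
  case False
  then obtain k where k: "v z = vpi ^ k"
    using int_ring_val_eq_vpi_power assms(1) by blast
  have "(j + 1) div 2 \<le> k"
  proof (cases "k < e")
    case True
    then have "j \<le> 2 * k"
      using val_two_mult_add_square[OF k] assms(3) by simp
    then show ?thesis
      by presburger
  next
    case False
    with assms(2) show ?thesis
      by presburger
  qed
  with k show ?thesis
    by simp
qed simp

text \<open>Newton's iteration for \<open>s\<^sup>2 = t\<^sup>2 + c\<close>: each step \<open>s \<mapsto> s - (s\<^sup>2 - t\<^sup>2 - c) / 2s\<close>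
  leaves an error equal to the square of the correction.\<close>
lemma square_root_approx:
  assumes t: "v t = vpi ^ T" and c: "v c \<le> vpi ^ Suc (2 * (T + e))"
  shows "\<exists>s. v (s - t) \<le> vpi ^ (T + e + 1) \<and> v (s ^ 2 - t ^ 2 - c) \<le> vpi ^ (Suc (2 * (T + e)) + d)"
proof (induction d)
  case 0
  show ?case
    using c by (intro exI[of _ t]) simp
next
  case (Suc d)
  define K where "K = Suc (2 * (T + e)) + d"
  obtain s where s: "v (s - t) \<le> vpi ^ (T + e + 1)" and err: "v (s ^ 2 - t ^ 2 - c) \<le> vpi ^ K"
    using Suc.IH unfolding K_def by blast
  have "v s = vpi ^ T"
    using t s by (rule val_eq_of_val_diff_le) simp
  then have v2s: "v (2 * s) = vpi ^ (e + T)"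
    by (simp add: val_mult val_two power_add)
  have "0 < v s"
    using \<open>v s = vpi ^ T\<close> vpi_power_pos[of T] by linarith
  then have "s \<noteq> 0"
    by auto
  define r where "r = s ^ 2 - t ^ 2 - c"
  define \<delta> where "\<delta> = - r / (2 * s)"
  have "v \<delta> = v r / vpi ^ (e + T)"
    unfolding \<delta>_def by (simp add: val_divide v2s)
  also have "\<dots> \<le> vpi ^ K / vpi ^ (e + T)"
    using err unfolding r_def by (simp add: divide_right_mono)
  also have "\<dots> = vpi ^ (K - e - T)"
  proof -
    have "vpi ^ K = vpi ^ (K - e - T) * vpi ^ (e + T)"
      unfolding power_add[symmetric] K_def by simp
    then show ?thesis
      using vpi_power_pos[of "e + T"] by simp
  qed
  finally have v\<delta>: "v \<delta> \<le> vpi ^ (K - e - T)" .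
  have "(s + \<delta>) ^ 2 - t ^ 2 - c = \<delta> ^ 2"
  proof -
    have "2 * s * \<delta> = - r"
      unfolding \<delta>_def using \<open>s \<noteq> 0\<close> two_neq_0 by simp
    then show ?thesis
      unfolding r_def by (simp add: algebra_simps power2_eq_square)
  qed
  moreover have "v (\<delta> ^ 2) \<le> vpi ^ (Suc (2 * (T + e)) + Suc d)"
    using val_square_le_vpi_power[OF v\<delta>] by (rule val_le_vpi_power_mono) (simp add: K_def)
  moreover have "v \<delta> \<le> vpi ^ (T + e + 1)"
    using v\<delta> by (rule val_le_vpi_power_mono) (simp add: K_def)
  then have "v ((s + \<delta>) - t) \<le> vpi ^ (T + e + 1)"
    using val_add_le[OF s] by (simp add: add_diff_eq[symmetric] diff_add_eq[symmetric] add.commute)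
  ultimately show ?case
    by (intro exI[of _ "s + \<delta>"]) simp
qed

end

section \<open>Haar measure of boxes\<close>

locale haar_local_field = local_field +
  fixes \<mu> :: "('a \<times> 'a) measure"
  assumes haar: "haar_o2 v \<pi> \<mu>"
begin

lemma prob_space_haar: "prob_space \<mu>"
  and space_haar: "space \<mu> = \<O> \<times> \<O>"
  and box2_in_sets: "c \<in> \<O> \<times> \<O> \<Longrightarrow> box2 v c (vpi ^ m) \<in> sets \<mu>"
  and translation_invariant:
    "A \<in> sets \<mu> \<Longrightarrow> a \<in> \<O> \<times> \<O> \<Longrightarrow> transl2 a ` A \<in> sets \<mu> \<and> measure \<mu> (transl2 a ` A) = measure \<mu> A"
  using haar unfolding haar_o2_def by auto

lemma measure_UN_residue_reps:
  assumes "\<And>r. r \<in> residue_reps \<Longrightarrow> A r \<in> sets \<mu> \<and> measure \<mu> (A r) = c"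
    and "disjoint_family_on A residue_reps"
  shows "(\<Union>r\<in>residue_reps. A r) \<in> sets \<mu> \<and> measure \<mu> (\<Union>r\<in>residue_reps. A r) = c / vpi"
proof
  interpret prob_space \<mu>
    by (rule prob_space_haar)
  show "(\<Union>r\<in>residue_reps. A r) \<in> sets \<mu>"
    using assms(1) finite_residue_reps by auto
  have "measure \<mu> (\<Union>r\<in>residue_reps. A r) = (\<Sum>r\<in>residue_reps. measure \<mu> (A r))"
    using assms finite_residue_reps by (intro finite_measure_finite_Union) auto
  also have "\<dots> = real (residue_card v) * c"
    using assms(1) card_residue_reps by simp
  finally show "measure \<mu> (\<Union>r\<in>residue_reps. A r) = c / vpi"
    by (simp add: residue_card_eq)
qed

definition vbox :: "'a \<Rightarrow> nat \<Rightarrow> 'a \<Rightarrow> nat \<Rightarrow> ('a \<times> 'a) set" where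
  "vbox a m b n = vball a m \<times> vball b n"

lemma vbox_subset: "a \<in> \<O> \<Longrightarrow> b \<in> \<O> \<Longrightarrow> vbox a m b n \<subseteq> \<O> \<times> \<O>"
  unfolding vbox_def using vball_subset_int_ring by blast

lemma box2_eq_vbox: "box2 v (a, b) (vpi ^ m) = vbox a m b m"
  unfolding box2_def vbox_def vball_def by auto

lemma translate_vbox: "transl2 (a, b) ` vbox 0 m 0 n = vbox a m b n"
proof (intro equalityI subsetI)
  fix x assume "x \<in> vbox a m b n"
  then have "(fst x - a, snd x - b) \<in> vbox 0 m 0 n" "x = transl2 (a, b) (fst x - a, snd x - b)"
    unfolding vbox_def vball_def transl2_def by auto
  then show "x \<in> transl2 (a, b) ` vbox 0 m 0 n"
    by blast
qed (auto simp: vbox_def vball_def transl2_def)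

definition vbox_law :: "nat \<Rightarrow> nat \<Rightarrow> real \<Rightarrow> bool" where
  "vbox_law m n c \<longleftrightarrow> (\<forall>a\<in>\<O>. \<forall>b\<in>\<O>. vbox a m b n \<in> sets \<mu> \<and> measure \<mu> (vbox a m b n) = c)"

lemma vbox_law_refine_fst:
  assumes "vbox_law (Suc m) n c"
  shows "vbox_law m n (c / vpi)"
  unfolding vbox_law_def
proof (intro ballI)
  fix a b assume ab: "a \<in> \<O>" "b \<in> \<O>"
  have "vbox (a + \<pi> ^ m * r) (Suc m) b n \<in> sets \<mu> \<and> measure \<mu> (vbox (a + \<pi> ^ m * r) (Suc m) b n) = c"
    if "r \<in> residue_reps" for r
    using assms subdivision_center_in_int_ring[OF ab(1) that] ab(2) unfolding vbox_law_def by blast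
  moreover have "disjoint_family_on (\<lambda>r. vbox (a + \<pi> ^ m * r) (Suc m) b n) residue_reps"
    unfolding disjoint_family_on_def vbox_def using vball_subdivision_disjoint by blast
  ultimately have "(\<Union>r\<in>residue_reps. vbox (a + \<pi> ^ m * r) (Suc m) b n) \<in> sets \<mu>
    \<and> measure \<mu> (\<Union>r\<in>residue_reps. vbox (a + \<pi> ^ m * r) (Suc m) b n) = c / vpi"
    by (rule measure_UN_residue_reps)
  moreover have "vbox a m b n = (\<Union>r\<in>residue_reps. vbox (a + \<pi> ^ m * r) (Suc m) b n)"
    unfolding vbox_def vball_eq_UN_vball[OF ab(1), of m] by blast
  ultimately show "vbox a m b n \<in> sets \<mu> \<and> measure \<mu> (vbox a m b n) = c / vpi"
    by simp
qed

lemma vbox_law_refine_snd: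
  assumes "vbox_law m (Suc n) c"
  shows "vbox_law m n (c / vpi)"
  unfolding vbox_law_def
proof (intro ballI)
  fix a b assume ab: "a \<in> \<O>" "b \<in> \<O>"
  have "vbox a m (b + \<pi> ^ n * r) (Suc n) \<in> sets \<mu> \<and> measure \<mu> (vbox a m (b + \<pi> ^ n * r) (Suc n)) = c"
    if "r \<in> residue_reps" for r
    using assms subdivision_center_in_int_ring[OF ab(2) that] ab(1) unfolding vbox_law_def by blast
  moreover have "disjoint_family_on (\<lambda>r. vbox a m (b + \<pi> ^ n * r) (Suc n)) residue_reps"
    unfolding disjoint_family_on_def vbox_def using vball_subdivision_disjoint by blast
  ultimately have "(\<Union>r\<in>residue_reps. vbox a m (b + \<pi> ^ n * r) (Suc n)) \<in> sets \<mu>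
    \<and> measure \<mu> (\<Union>r\<in>residue_reps. vbox a m (b + \<pi> ^ n * r) (Suc n)) = c / vpi"
    by (rule measure_UN_residue_reps)
  moreover have "vbox a m b n = (\<Union>r\<in>residue_reps. vbox a m (b + \<pi> ^ n * r) (Suc n))"
    unfolding vbox_def vball_eq_UN_vball[OF ab(2), of n] by blast
  ultimately show "vbox a m b n \<in> sets \<mu> \<and> measure \<mu> (vbox a m b n) = c / vpi"
    by simp
qed

lemma vbox_law_translate:
  assumes "vbox 0 m 0 n \<in> sets \<mu>"
  shows "vbox_law m n (measure \<mu> (vbox 0 m 0 n))"
  unfolding vbox_law_def
proof (intro ballI)
  fix a b assume "a \<in> \<O>" "b \<in> \<O>"
  then show "vbox a m b n \<in> sets \<mu> \<and> measure \<mu> (vbox a m b n) = measure \<mu> (vbox 0 m 0 n)"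
    using translation_invariant[OF assms, of "(a, b)"] by (simp add: translate_vbox)
qed

lemma vbox_law_diagonal: "vbox_law m m (vpi ^ (2 * m))"
proof (induction m)
  case 0
  interpret prob_space \<mu>
    by (rule prob_space_haar)
  have "vbox a 0 b 0 = space \<mu>" if "a \<in> \<O>" "b \<in> \<O>" for a b
    using vball_subset_int_ring[OF that(1), of 0] vball_subset_int_ring[OF that(2), of 0] that
    unfolding space_haar vbox_def vball_def by (auto simp: int_ring_iff intro!: val_diff_le)
  then show ?case
    unfolding vbox_law_def using prob_space by simp
next
  case (Suc m)
  define c where "c = measure \<mu> (vbox 0 (Suc m) 0 (Suc m))"
  have law: "vbox_law (Suc m) (Suc m) c"
    unfolding c_def using box2_in_sets[of "(0, 0)" "Suc m"]
    by (intro vbox_law_translate) (simp only: box2_eq_vbox mem_Times_iff zero_in_int_ring fst_conv snd_conv)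
  then have "vbox_law m m (c / vpi / vpi)"
    by (intro vbox_law_refine_fst vbox_law_refine_snd)
  then have "c / vpi / vpi = measure \<mu> (vbox 0 m 0 m)"
    unfolding vbox_law_def by simp
  also have "\<dots> = vpi ^ (2 * m)"
    using Suc.IH unfolding vbox_law_def by simp
  finally have "c / vpi / vpi = vpi ^ (2 * m)" .
  then have "c = vpi ^ (2 * Suc m)"
    using vpi_pos by (simp add: field_simps)
  with law show ?case
    by simp
qed

lemma vbox_law: "vbox_law m n (vpi ^ (m + n))"
proof -
  define M where "M = max m n"
  have refine_fst: "vbox_law (m + d) M (vpi ^ (m + d + M)) \<Longrightarrow> vbox_law m M (vpi ^ (m + M))" for d
  proof (induction d)
    case (Suc d)
    have "vbox_law (m + d) M (vpi ^ (m + Suc d + M) / vpi)"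
      using Suc.prems by (intro vbox_law_refine_fst) simp
    moreover have "vpi ^ (m + Suc d + M) / vpi = vpi ^ (m + d + M)"
      using vpi_pos by simp
    ultimately show ?case
      using Suc.IH by simp
  qed simp
  have refine_snd: "vbox_law m (n + d) (vpi ^ (m + n + d)) \<Longrightarrow> vbox_law m n (vpi ^ (m + n))" for d
  proof (induction d)
    case (Suc d)
    have "vbox_law m (n + d) (vpi ^ (m + n + Suc d) / vpi)"
      using Suc.prems by (intro vbox_law_refine_snd) simp
    moreover have "vpi ^ (m + n + Suc d) / vpi = vpi ^ (m + n + d)"
      using vpi_pos by simp
    ultimately show ?case
      using Suc.IH by simp
  qed simp
  have "vbox_law M M (vpi ^ (M + M))"
    using vbox_law_diagonal by (simp add: mult_2)
  then have "vbox_law m M (vpi ^ (m + M))"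
    using refine_fst[of "M - m"] unfolding M_def by simp
  then show ?thesis
    using refine_snd[of "M - n"] unfolding M_def by (simp add: add.assoc)
qed

lemma
  assumes "a \<in> \<O>" "b \<in> \<O>"
  shows vbox_in_sets: "vbox a m b n \<in> sets \<mu>"
    and measure_vbox: "measure \<mu> (vbox a m b n) = vpi ^ (m + n)"
  using vbox_law[of m n] assms unfolding vbox_law_def by auto

end

section \<open>The norm form \<open>x\<^sub>1\<^sup>2 - \<Delta> x\<^sub>2\<^sup>2\<close> with \<open>|\<Delta>| = q\<^sup>-\<^sup>1\<close>\<close>

locale norm_form_field = dyadic_local_field +
  fixes \<Delta> :: 'a
  assumes val_Delta: "v \<Delta> = vpi"
begin

definition norm_form :: "'a \<times> 'a \<Rightarrow> 'a" where
  "norm_form x = fst x ^ 2 - \<Delta> * snd x ^ 2"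

lemma val_Delta_mult_square: "v (\<Delta> * y ^ 2) = vpi * v y ^ 2"
  by (simp add: val_mult val_power val_Delta)

lemma val_norm_form:
  assumes "x \<in> \<O> \<times> \<O>"
  shows "v (norm_form x) = max (v (fst x) ^ 2) (vpi * v (snd x) ^ 2)"
proof (cases "x = 0")
  case False
  then have "v (fst x ^ 2) \<noteq> v (\<Delta> * snd x ^ 2)"
    using val_square_neq_vpi_mult_val_square[of "fst x" "snd x"] assms
    by (auto simp: val_power val_Delta_mult_square prod_eq_iff mem_Times_iff)
  then show ?thesis
    unfolding norm_form_def by (simp add: val_diff_eq_max val_power val_Delta_mult_square)
qed (simp add: norm_form_def)

text \<open>Near the unit norm \<open>1\<close>: writing \<open>y\<^sub>1 = 1 + z\<close>, the equation \<open>2z + z\<^sup>2 = \<Delta> y\<^sub>2\<^sup>2 + E\<close>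
  together with the parity obstruction for \<open>2z + z\<^sup>2\<close> bounds both \<open>y\<^sub>2\<close> and \<open>z\<close>.\<close>
lemma norm_form_near_1:
  assumes y: "y1 \<in> \<O>" "y2 \<in> \<O>" and E: "v (norm_form (y1, y2) - 1) \<le> vpi ^ j"
  shows "v y2 \<le> vpi ^ min (j div 2) e"
    and "j \<le> 2 * e \<Longrightarrow> v (y1 - 1) \<le> vpi ^ ((j + 1) div 2)"
proof -
  define z where "z = y1 - 1"
  have z: "z \<in> \<O>"
    using y(1) unfolding z_def int_ring_iff by (intro val_diff_le) simp_all
  have eq: "2 * z + z ^ 2 = \<Delta> * y2 ^ 2 + (norm_form (y1, y2) - 1)"
    unfolding z_def norm_form_def by (simp add: algebra_simps power2_eq_square)
  show y2: "v y2 \<le> vpi ^ min (j div 2) e"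
  proof (rule ccontr)
    assume small: "\<not> v y2 \<le> vpi ^ min (j div 2) e"
    then have "y2 \<noteq> 0"
      by auto
    then obtain b where b: "v y2 = vpi ^ b"
      using int_ring_val_eq_vpi_power y(2) by blast
    then have "b < min (j div 2) e"
      using small by (simp add: not_le)
    have vD: "v (\<Delta> * y2 ^ 2) = vpi ^ Suc (2 * b)"
      using b by (simp add: val_Delta_mult_square vpi_power_square)
    have "vpi ^ j < vpi ^ Suc (2 * b)"
      using \<open>b < min (j div 2) e\<close> by (subst vpi_power_less_iff) presburger
    then have "v (\<Delta> * y2 ^ 2 + (norm_form (y1, y2) - 1)) = vpi ^ Suc (2 * b)"
      using E vD val_add_eq_max[of "\<Delta> * y2 ^ 2" "norm_form (y1, y2) - 1"] by simp
    moreover have "v (2 * z + z ^ 2) \<noteq> vpi ^ Suc (2 * b)"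
      using \<open>b < min (j div 2) e\<close> by (intro val_two_mult_add_square_neq_odd z) simp_all
    ultimately show False
      using eq by simp
  qed
  assume "j \<le> 2 * e"
  then have "v y2 \<le> vpi ^ (j div 2)"
    using y2 by (simp add: min_def split: if_splits)
  then have "v (\<Delta> * y2 ^ 2) \<le> vpi ^ j"
    using vpi_mult_val_square_le_vpi_power_iff[OF y(2)] by (simp add: val_Delta_mult_square)
  then have "v (2 * z + z ^ 2) \<le> vpi ^ j"
    unfolding eq using E by (rule val_add_le)
  then show "v (y1 - 1) \<le> vpi ^ ((j + 1) div 2)"
    unfolding z_def[symmetric] using z \<open>j \<le> 2 * e\<close> by (rule val_le_of_two_mult_add_square_le[rotated 2])
qed

end

section \<open>Level sets of the norm form near \<open>t\<^sup>2\<close>\<close>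

lemma sums_geometric_doubled_tail:
  fixes c w :: "'a::{real_normed_field,banach}"
  assumes "norm w < 1"
  shows "(\<lambda>l. c * w ^ l * (if l < N then 1 else 2)) sums (c * (1 + w ^ N) / (1 - w))"
proof -
  have "(\<lambda>l. c * w ^ l) sums (c * (1 / (1 - w)))"
    by (rule sums_mult[OF geometric_sums[OF assms]])
  moreover have "(\<lambda>l. if N \<le> l then c * w ^ l else 0) sums (c * w ^ N * (1 / (1 - w)))"
  proof -
    have "(\<lambda>i. c * w ^ N * w ^ i) sums (c * w ^ N * (1 / (1 - w)))"
      by (rule sums_mult[OF geometric_sums[OF assms]])
    then have "(\<lambda>i. if N \<le> i + N then c * w ^ (i + N) else 0) sums (c * w ^ N * (1 / (1 - w)))"
      by (simp add: power_add mult_ac)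
    then show ?thesis
      by (subst (asm) sums_iff_shift) simp
  qed
  ultimately have "(\<lambda>l. c * w ^ l + (if N \<le> l then c * w ^ l else 0))
      sums (c * (1 / (1 - w)) + c * w ^ N * (1 / (1 - w)))"
    by (rule sums_add)
  moreover have "c * w ^ l + (if N \<le> l then c * w ^ l else 0) = c * w ^ l * (if l < N then 1 else 2)" for l
    by simp
  moreover have "c * (1 / (1 - w)) + c * w ^ N * (1 / (1 - w)) = c * (1 + w ^ N) / (1 - w)"
    by (simp add: distrib_left add_divide_distrib)
  ultimately show ?thesis
    by simp
qed

locale norm_form_level_sets = norm_form_field v \<pi> e \<Delta> + haar_local_field v \<pi> \<mu>
  for v :: "'a::field \<Rightarrow> real" and \<pi> e \<Delta> \<mu> +
  fixes t :: 'a and T :: nat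
  assumes val_t: "v t = vpi ^ T"
begin

lemma t_in_int_ring: "t \<in> \<O>"
  using val_t vpi_power_le_1 by (simp add: int_ring_iff)

lemma val_t_square: "v (t ^ 2) = vpi ^ (2 * T)"
  by (simp add: val_power val_t vpi_power_square)

lemma t_neq_0: "t \<noteq> 0"
  using val_t vpi_power_pos[of T] by auto

definition level_set :: "nat \<Rightarrow> ('a \<times> 'a) set" where
  "level_set m = {x \<in> \<O> \<times> \<O>. v (norm_form x - t ^ 2) \<le> vpi ^ m}"

lemma level_set_low:
  assumes "m \<le> 2 * T"
  shows "level_set m = vbox 0 ((m + 1) div 2) 0 (m div 2)"
proof -
  have t2: "v (t ^ 2) \<le> vpi ^ m"
    using assms by (simp add: val_t_square)
  have "x \<in> level_set m \<longleftrightarrow> x \<in> vbox 0 ((m + 1) div 2) 0 (m div 2)" if x: "x \<in> \<O> \<times> \<O>" for x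
  proof -
    have "v (norm_form x - t ^ 2) \<le> vpi ^ m \<longleftrightarrow> v (norm_form x) \<le> vpi ^ m"
      using t2 val_add_le[of "norm_form x - t ^ 2" "vpi ^ m" "t ^ 2"] val_diff_le[of "norm_form x"] by auto
    also have "\<dots> \<longleftrightarrow> v (fst x) ^ 2 \<le> vpi ^ m \<and> vpi * v (snd x) ^ 2 \<le> vpi ^ m"
      using val_norm_form[OF x] by simp
    also have "\<dots> \<longleftrightarrow> x \<in> vbox 0 ((m + 1) div 2) 0 (m div 2)"
      using x val_square_le_vpi_power_iff vpi_mult_val_square_le_vpi_power_iff
      by (auto simp: vbox_def vball_def mem_Times_iff)
    finally show ?thesis
      unfolding level_set_def using x by simp
  qed
  then show ?thesis
    using vbox_subset[OF zero_in_int_ring zero_in_int_ring] unfolding level_set_def by blast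
qed

lemma level_set_high_bounds:
  assumes m: "2 * T < m" and x: "x \<in> level_set m"
  shows "v (snd x) \<le> vpi ^ (T + min ((m - 2 * T) div 2) e)"
    and "m - 2 * T \<le> 2 * e \<Longrightarrow> v (fst x - t) \<le> vpi ^ (T + (m - 2 * T + 1) div 2)"
proof -
  obtain x1 x2 where xx: "x = (x1, x2)" and x12: "x1 \<in> \<O>" "x2 \<in> \<O>"
    and err: "v (norm_form (x1, x2) - t ^ 2) \<le> vpi ^ m"
    using x unfolding level_set_def by auto
  have "vpi ^ m < vpi ^ (2 * T)"
    using m by simp
  then have "v (norm_form (x1, x2) - t ^ 2) < v (t ^ 2)"
    using err val_t_square by linarith
  from val_eq_of_val_diff_less[OF this] have "v (norm_form (x1, x2)) = vpi ^ (2 * T)"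
    using val_t_square by simp
  then have max: "max (v x1 ^ 2) (vpi * v x2 ^ 2) = vpi ^ (2 * T)"
    using val_norm_form[of "(x1, x2)"] x12 by simp
  have "(2 * T + 1) div 2 = T" "2 * T div 2 = T"
    by simp_all
  then have "v x1 \<le> vpi ^ T" "v x2 \<le> vpi ^ T"
    using max.cobounded1[of "v x1 ^ 2" "vpi * v x2 ^ 2"] max.cobounded2[of "vpi * v x2 ^ 2" "v x1 ^ 2"]
      val_square_le_vpi_power_iff[OF x12(1), of "2 * T"]
      vpi_mult_val_square_le_vpi_power_iff[OF x12(2), of "2 * T"]
    unfolding max by (simp_all only: max.commute)
  then have y: "x1 / t \<in> \<O>" "x2 / t \<in> \<O>"
    unfolding int_ring_iff val_divide val_t using vpi_power_pos[of T] by simp_all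
  have "norm_form (x1 / t, x2 / t) - 1 = (norm_form (x1, x2) - t ^ 2) / t ^ 2"
    using t_neq_0 by (simp add: norm_form_def field_simps)
  then have "v (norm_form (x1 / t, x2 / t) - 1) = v (norm_form (x1, x2) - t ^ 2) / vpi ^ (2 * T)"
    by (simp add: val_divide val_t_square)
  also have "\<dots> \<le> vpi ^ m / vpi ^ (2 * T)"
    using err by (simp add: divide_right_mono)
  also have "\<dots> = vpi ^ (m - 2 * T)"
    using m by (simp add: power_diff)
  finally have near: "v (norm_form (x1 / t, x2 / t) - 1) \<le> vpi ^ (m - 2 * T)" .
  have "v x2 = vpi ^ T * v (x2 / t)"
    using vpi_power_pos[of T] by (simp add: val_divide val_t)
  also have "\<dots> \<le> vpi ^ T * vpi ^ min ((m - 2 * T) div 2) e"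
    using norm_form_near_1(1)[OF y near] by (rule mult_left_mono) simp
  finally show "v (snd x) \<le> vpi ^ (T + min ((m - 2 * T) div 2) e)"
    unfolding xx by (simp add: power_add)
  assume "m - 2 * T \<le> 2 * e"
  have "x1 - t = t * (x1 / t - 1)"
    using t_neq_0 by (simp add: field_simps)
  then have "v (x1 - t) = vpi ^ T * v (x1 / t - 1)"
    by (simp add: val_mult val_t)
  also have "\<dots> \<le> vpi ^ T * vpi ^ ((m - 2 * T + 1) div 2)"
    using norm_form_near_1(2)[OF y near \<open>m - 2 * T \<le> 2 * e\<close>] by (rule mult_left_mono) simp
  finally show "v (fst x - t) \<le> vpi ^ (T + (m - 2 * T + 1) div 2)"
    unfolding xx by (simp add: power_add)
qed

lemma level_set_mid:
  assumes m: "2 * T < m" "m \<le> 2 * T + 2 * e"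
  shows "level_set m = vbox t (T + (m - 2 * T + 1) div 2) 0 (T + (m - 2 * T) div 2)"
proof (intro equalityI subsetI)
  fix x assume x: "x \<in> level_set m"
  have "min ((m - 2 * T) div 2) e = (m - 2 * T) div 2"
    using m(2) by simp
  then show "x \<in> vbox t (T + (m - 2 * T + 1) div 2) 0 (T + (m - 2 * T) div 2)"
    using level_set_high_bounds[OF m(1) x] m(2) unfolding vbox_def vball_def by (simp add: mem_Times_iff)
next
  fix x assume x: "x \<in> vbox t (T + (m - 2 * T + 1) div 2) 0 (T + (m - 2 * T) div 2)"
  define j where "j = m - 2 * T"
  have mj: "m = 2 * T + j" and j: "j \<le> 2 * e"
    using m unfolding j_def by auto
  define d where "d = fst x - t"
  have vd: "v d \<le> vpi ^ (T + (j + 1) div 2)" and vx2: "v (snd x) \<le> vpi ^ (T + j div 2)"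
    using x unfolding vbox_def vball_def d_def j_def by (auto simp: mem_Times_iff)
  have x_int: "x \<in> \<O> \<times> \<O>"
    using x vbox_subset[OF t_in_int_ring zero_in_int_ring] by blast
  have "norm_form x - t ^ 2 = 2 * (t * d) + d ^ 2 - \<Delta> * snd x ^ 2"
    unfolding norm_form_def d_def by (simp add: algebra_simps power2_eq_square)
  moreover have "v (2 * (t * d)) \<le> vpi ^ m"
  proof -
    have "v (2 * (t * d)) \<le> vpi ^ (e + (T + (T + (j + 1) div 2)))"
      using val_mult_le_vpi_power[of t T d "T + (j + 1) div 2"] vd val_t
      by (intro val_mult_le_vpi_power) (simp_all add: val_two)
    then show ?thesis
      by (rule val_le_vpi_power_mono) (use j in \<open>simp add: mj\<close>)
  qed
  moreover have "v (d ^ 2) \<le> vpi ^ m"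
    using val_square_le_vpi_power[OF vd] by (rule val_le_vpi_power_mono) (simp add: mj)
  moreover have "v (\<Delta> * snd x ^ 2) \<le> vpi ^ m"
  proof -
    have "m div 2 = T + j div 2"
      unfolding mj by simp
    then show ?thesis
      using vpi_mult_val_square_le_vpi_power_iff[of "snd x" m] vx2 x_int
      by (simp add: val_Delta_mult_square mem_Times_iff)
  qed
  ultimately have "v (norm_form x - t ^ 2) \<le> vpi ^ m"
    by (simp add: val_add_le val_diff_le)
  with x_int show "x \<in> level_set m"
    unfolding level_set_def by simp
qed

text \<open>Far above level \<open>2T\<close>, over a small ball in the second coordinate the level set consists of
  the two balls around the square roots \<open>\<plusminus>s\<close> of \<open>t\<^sup>2 + \<Delta> b\<^sup>2\<close>; they are disjoint because
  \<open>|2s| = q\<^sup>-\<^sup>(\<^sup>T\<^sup>+\<^sup>e\<^sup>)\<close> exceeds their radius.\<close>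
lemma level_set_fiber:
  assumes m: "Suc (2 * (T + e)) \<le> m" and b: "v b \<le> vpi ^ (T + e)"
    and s: "v (s - t) \<le> vpi ^ (T + e + 1)" "v (s ^ 2 - t ^ 2 - \<Delta> * b ^ 2) \<le> vpi ^ m"
  shows "level_set m \<inter> (UNIV \<times> vball b (m - T))
      = vbox s (m - T - e) b (m - T) \<union> vbox (- s) (m - T - e) b (m - T)"
    and "vbox s (m - T - e) b (m - T) \<inter> vbox (- s) (m - T - e) b (m - T) = {}"
proof -
  define n where "n = m - T - e"
  define k where "k = m - T"
  have nk: "n + (T + e) = m" "T + e < n" "T + e \<le> k" "k = n + e"
    unfolding n_def k_def using m by auto
  have kn: "m - T = k" "k - e = n"
    unfolding n_def k_def by simp_all
  have vs: "v s = vpi ^ T"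
    using val_t s(1) by (rule val_eq_of_val_diff_le) simp
  then have s_int: "s \<in> \<O>" "- s \<in> \<O>"
    using vpi_power_le_1 by (simp_all add: int_ring_iff)
  have b_int: "b \<in> \<O>"
    using b vpi_power_le_1[of "T + e"] by (simp add: int_ring_iff)
  have v2s: "v (2 * s) = vpi ^ (T + e)"
    using vs by (simp add: val_mult val_two power_add mult.commute)
  have "x \<in> level_set m \<longleftrightarrow> x \<in> vbox s n b k \<union> vbox (- s) n b k" if x2: "snd x \<in> vball b k" for x
  proof -
    obtain x1 x2 where xx: "x = (x1, x2)"
      by (cases x)
    have x2b: "v (x2 - b) \<le> vpi ^ k"
      using x2 unfolding xx vball_def by simp
    have x2_int: "x2 \<in> \<O>"
      using x2 vball_subset_int_ring[OF b_int] unfolding xx by auto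
    have "v (2 * b) \<le> vpi ^ (e + (T + e))"
      using val_mult_le_vpi_power[of 2 e b "T + e"] b by (simp add: val_two)
    then have "v (2 * b) \<le> vpi ^ (T + e)"
      by (rule val_le_vpi_power_mono) simp
    moreover have "v (x2 - b) \<le> vpi ^ (T + e)"
      using x2b nk(3) by (rule val_le_vpi_power_mono)
    ultimately have "v ((x2 - b) + 2 * b) \<le> vpi ^ (T + e)"
      by (rule val_add_le[rotated])
    moreover have "(x2 - b) + 2 * b = x2 + b"
      by simp
    ultimately have "v ((x2 - b) * (x2 + b)) \<le> vpi ^ (k + (T + e))"
      using x2b by (simp add: val_mult_le_vpi_power)
    then have "v (\<Delta> * ((x2 - b) * (x2 + b))) \<le> vpi ^ (1 + (k + (T + e)))"
      by (rule val_mult_le_vpi_power[rotated]) (simp add: val_Delta)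
    then have "v (\<Delta> * ((x2 - b) * (x2 + b))) \<le> vpi ^ m"
      by (rule val_le_vpi_power_mono) (use nk in simp)
    then have vR: "v ((s ^ 2 - t ^ 2 - \<Delta> * b ^ 2) - \<Delta> * ((x2 - b) * (x2 + b))) \<le> vpi ^ m"
      by (rule val_diff_le[OF s(2)])
    define z where "z = x1 - s"
    have iden: "norm_form x - t ^ 2
        = z * (z + 2 * s) + ((s ^ 2 - t ^ 2 - \<Delta> * b ^ 2) - \<Delta> * ((x2 - b) * (x2 + b)))"
      unfolding norm_form_def xx z_def by (simp add: algebra_simps power2_eq_square)
    have "v (norm_form x - t ^ 2) \<le> vpi ^ m \<longleftrightarrow> v (z * (z + 2 * s)) \<le> vpi ^ m"
      unfolding iden using vR val_add_le val_diff_le[of "_ + _" "vpi ^ m"]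
      by (metis add_diff_cancel_right')
    also have "\<dots> \<longleftrightarrow> v z \<le> vpi ^ n \<or> v (z + 2 * s) \<le> vpi ^ n"
      using val_mult_add_le_iff[OF v2s nk(2), of z] nk(1) by simp
    also have "\<dots> \<longleftrightarrow> x1 \<in> vball s n \<or> x1 \<in> vball (- s) n"
      unfolding vball_def z_def by (simp add: algebra_simps)
    finally have "v (norm_form x - t ^ 2) \<le> vpi ^ m \<longleftrightarrow> x1 \<in> vball s n \<or> x1 \<in> vball (- s) n" .
    moreover have "x1 \<in> vball s n \<or> x1 \<in> vball (- s) n \<Longrightarrow> x1 \<in> \<O>"
      using vball_subset_int_ring[OF s_int(1)] vball_subset_int_ring[OF s_int(2)] by blast
    ultimately show ?thesis
      using x2 x2_int unfolding level_set_def vbox_def xx by auto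
  qed
  then show "level_set m \<inter> (UNIV \<times> vball b (m - T))
      = vbox s (m - T - e) b (m - T) \<union> vbox (- s) (m - T - e) b (m - T)"
    unfolding kn vbox_def by (auto simp: mem_Times_iff)
  show "vbox s (m - T - e) b (m - T) \<inter> vbox (- s) (m - T - e) b (m - T) = {}"
  proof (rule equals0I)
    fix x assume "x \<in> vbox s (m - T - e) b (m - T) \<inter> vbox (- s) (m - T - e) b (m - T)"
    then have "v (fst x - s) \<le> vpi ^ n" "v (fst x + s) \<le> vpi ^ n"
      unfolding vbox_def vball_def n_def by auto
    then have "v ((fst x + s) - (fst x - s)) \<le> vpi ^ n"
      by (rule val_diff_le[rotated])
    moreover have "vpi ^ n < vpi ^ (T + e)"
      using nk(2) by simp
    ultimately show False
      using v2s by (simp add: algebra_simps mult_2)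
  qed
qed

lemma measure_level_set_slice:
  assumes m: "Suc (2 * (T + e)) \<le> m"
  shows "d \<le> m - 2 * T - e \<Longrightarrow> v b \<le> vpi ^ (T + e) \<Longrightarrow>
    level_set m \<inter> (UNIV \<times> vball b (m - T - d)) \<in> sets \<mu> \<and>
    measure \<mu> (level_set m \<inter> (UNIV \<times> vball b (m - T - d))) = 2 * vpi ^ ((m - T - e) + (m - T - d))"
proof (induction d arbitrary: b)
  case 0
  have "v (\<Delta> * b ^ 2) \<le> vpi * vpi ^ (2 * (T + e))"
    using mult_left_mono[OF val_square_le_vpi_power[OF "0.prems"(2)] vpi_nonneg]
    by (simp add: val_mult val_Delta)
  then obtain s where s1: "v (s - t) \<le> vpi ^ (T + e + 1)"
      and s2: "v (s ^ 2 - t ^ 2 - \<Delta> * b ^ 2) \<le> vpi ^ (Suc (2 * (T + e)) + (m - Suc (2 * (T + e))))"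
    using square_root_approx[OF val_t, of "\<Delta> * b ^ 2"] by auto
  have "Suc (2 * (T + e)) + (m - Suc (2 * (T + e))) = m"
    using m by simp
  with s2 have s2: "v (s ^ 2 - t ^ 2 - \<Delta> * b ^ 2) \<le> vpi ^ m"
    by (simp only:)
  have s_int: "s \<in> \<O>" "- s \<in> \<O>"
    using val_eq_of_val_diff_le[OF val_t s1] vpi_power_le_1 by (simp_all add: int_ring_iff)
  have b_int: "b \<in> \<O>"
    using "0.prems"(2) vpi_power_le_1[of "T + e"] by (simp add: int_ring_iff)
  note fiber = level_set_fiber[OF m "0.prems"(2) s1 s2]
  interpret prob_space \<mu>
    by (rule prob_space_haar)
  have "measure \<mu> (vbox s (m - T - e) b (m - T) \<union> vbox (- s) (m - T - e) b (m - T))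
      = measure \<mu> (vbox s (m - T - e) b (m - T)) + measure \<mu> (vbox (- s) (m - T - e) b (m - T))"
    using vbox_in_sets s_int b_int fiber(2) by (intro finite_measure_Union) auto
  also have "\<dots> = 2 * vpi ^ ((m - T - e) + (m - T))"
    using measure_vbox s_int b_int by simp
  finally show ?case
    using vbox_in_sets s_int b_int by (simp add: fiber(1))
next
  case (Suc d)
  define i where "i = m - T - Suc d"
  have si: "Suc i = m - T - d" and iTe: "T + e \<le> i"
    using Suc.prems(1) unfolding i_def by auto
  have b_int: "b \<in> \<O>"
    using Suc.prems(2) vpi_power_le_1[of "T + e"] by (simp add: int_ring_iff)
  define A where "A r = level_set m \<inter> (UNIV \<times> vball (b + \<pi> ^ i * r) (Suc i))" for r
  have "A r \<in> sets \<mu> \<and> measure \<mu> (A r) = 2 * vpi ^ ((m - T - e) + Suc i)" if r: "r \<in> residue_reps" for r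
  proof -
    have "v r \<le> vpi ^ 0"
      using r residue_reps_subset by (auto simp: int_ring_iff)
    then have "v (\<pi> ^ i * r) \<le> vpi ^ (i + 0)"
      by (intro val_mult_le_vpi_power) (simp_all add: val_power)
    then have "v (\<pi> ^ i * r) \<le> vpi ^ (T + e)"
      by (rule val_le_vpi_power_mono) (use iTe in simp)
    then have "v (b + \<pi> ^ i * r) \<le> vpi ^ (T + e)"
      using Suc.prems(2) by (rule val_add_le[rotated])
    then show ?thesis
      using Suc.IH[of "b + \<pi> ^ i * r"] Suc.prems(1) unfolding A_def si by simp
  qed
  moreover have "disjoint_family_on A residue_reps"
    unfolding disjoint_family_on_def A_def using vball_subdivision_disjoint by blast
  ultimately have "(\<Union>r\<in>residue_reps. A r) \<in> sets \<mu>
      \<and> measure \<mu> (\<Union>r\<in>residue_reps. A r) = 2 * vpi ^ ((m - T - e) + Suc i) / vpi"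
    by (rule measure_UN_residue_reps)
  moreover have "level_set m \<inter> (UNIV \<times> vball b i) = (\<Union>r\<in>residue_reps. A r)"
    unfolding A_def vball_eq_UN_vball[OF b_int, of i] by blast
  ultimately show ?case
    unfolding i_def[symmetric] by simp
qed

lemma measure_level_set_high:
  assumes m: "Suc (2 * (T + e)) \<le> m"
  shows "measure \<mu> (level_set m) = 2 * vpi ^ m"
proof -
  have "min ((m - 2 * T) div 2) e = e"
    using m by simp
  then have "level_set m \<subseteq> UNIV \<times> vball 0 (T + e)"
    using level_set_high_bounds(1)[of m] m unfolding vball_def by (auto simp: mem_Times_iff)
  moreover have "m - T - (m - 2 * T - e) = T + e" "(m - T - e) + (T + e) = m"
    using m by simp_all
  ultimately show ?thesis
    using measure_level_set_slice[OF m, of "m - 2 * T - e" 0] by (simp add: Int_absorb2)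
qed

lemma measure_level_set: "measure \<mu> (level_set m) = (if m \<le> 2 * T + 2 * e then 1 else 2) * vpi ^ m"
proof -
  consider "m \<le> 2 * T" | "2 * T < m" "m \<le> 2 * T + 2 * e" | "Suc (2 * (T + e)) \<le> m"
    using le_less_linear[of m "2 * T"] le_less_linear[of m "2 * T + 2 * e"] by auto
  then show ?thesis
  proof cases
    case 1
    have "(m + 1) div 2 + m div 2 = m"
      by simp
    with 1 show ?thesis
      by (simp add: level_set_low measure_vbox)
  next
    case 2
    then have "(T + (m - 2 * T + 1) div 2) + (T + (m - 2 * T) div 2) = m"
      by simp
    with 2 show ?thesis
      by (simp add: level_set_mid measure_vbox t_in_int_ring)
  next
    case 3
    then show ?thesis
      by (simp add: measure_level_set_high)
  qed
qed

lemma X_l_eq_measure_level_set: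
  "X_l v \<pi> \<mu> (\<lambda>(x1, x2). x1\<^sup>2 - \<Delta> * x2\<^sup>2) (t\<^sup>2) l = measure \<mu> (level_set (l + e))"
proof -
  have v_factor: "v (2 * \<pi> ^ l) = vpi ^ (l + e)"
    by (simp add: val_mult val_power val_two power_add mult.commute)
  have "(\<exists>y\<in>\<O>. r = 2 * \<pi> ^ l * y) \<longleftrightarrow> v r \<le> vpi ^ (l + e)" for r
  proof
    assume "\<exists>y\<in>\<O>. r = 2 * \<pi> ^ l * y"
    then obtain y where "y \<in> \<O>" "r = 2 * \<pi> ^ l * y"
      by blast
    then show "v r \<le> vpi ^ (l + e)"
      using v_factor mult_left_mono[of "v y" 1 "vpi ^ (l + e)"] by (simp add: val_mult int_ring_iff)
  next
    assume "v r \<le> vpi ^ (l + e)"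
    then have "r / (2 * \<pi> ^ l) \<in> \<O>"
      using vpi_power_pos[of "l + e"] by (simp add: int_ring_iff val_divide v_factor)
    moreover have "r = 2 * \<pi> ^ l * (r / (2 * \<pi> ^ l))"
      using two_neq_0 by simp
    ultimately show "\<exists>y\<in>\<O>. r = 2 * \<pi> ^ l * y"
      by blast
  qed
  then show ?thesis
    unfolding X_l_def level_set_def norm_form_def by (simp add: case_prod_beta)
qed

lemma X_gen_eq:
  assumes "0 < Re \<beta>"
  shows "let q = real (residue_card v);
             z = of_real q powr (- \<beta>);
             w = z / of_real q
         in X_gen v \<pi> \<mu> (\<lambda>(x1, x2). x1\<^sup>2 - \<Delta> * x2\<^sup>2) \<beta> (t\<^sup>2)
            = of_real (v 2) * (1 + w ^ (2 * T + e + 1)) / (1 - w)"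
proof -
  define q where "q = real (residue_card v)"
  define z :: complex where "z = of_real q powr (- \<beta>)"
  define w where "w = z / of_real q"
  have q: "1 < q" "vpi = 1 / q"
    unfolding q_def using residue_card_gt_1 residue_card_eq by simp_all
  have "norm z = q powr (- Re \<beta>)"
    unfolding z_def using norm_powr_real_powr[of "of_real q" "- \<beta>"] q(1) by simp
  also have "\<dots> < 1"
    using q(1) assms by (intro powr_less_one) auto
  finally have "norm w < 1"
    unfolding w_def using q(1) by (simp add: norm_divide divide_less_eq)
  have "z ^ l * of_real (X_l v \<pi> \<mu> (\<lambda>(x1, x2). x1\<^sup>2 - \<Delta> * x2\<^sup>2) (t\<^sup>2) l)
      = of_real (v 2) * w ^ l * (if l < 2 * T + e + 1 then 1 else 2)" for l
  proof -
    have "l + e \<le> 2 * T + 2 * e \<longleftrightarrow> l < 2 * T + e + 1"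
      by arith
    then have "X_l v \<pi> \<mu> (\<lambda>(x1, x2). x1\<^sup>2 - \<Delta> * x2\<^sup>2) (t\<^sup>2) l
        = v 2 * vpi ^ l * (if l < 2 * T + e + 1 then 1 else 2)"
      by (simp add: X_l_eq_measure_level_set measure_level_set val_two power_add)
    moreover have "z ^ l * of_real (vpi ^ l) = w ^ l"
      unfolding w_def q(2) by (simp add: power_divide)
    ultimately show ?thesis
      by (simp add: mult_ac)
  qed
  then have "X_gen v \<pi> \<mu> (\<lambda>(x1, x2). x1\<^sup>2 - \<Delta> * x2\<^sup>2) \<beta> (t\<^sup>2)
      = of_real (v 2) * (1 + w ^ (2 * T + e + 1)) / (1 - w)"
    using sums_geometric_doubled_tail[OF \<open>norm w < 1\<close>, of "of_real (v 2)" "2 * T + e + 1"]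
    unfolding X_gen_def z_def[symmetric] q_def[symmetric] by (simp add: sums_iff)
  then show ?thesis
    unfolding Let_def z_def w_def q_def .
qed

end

theorem proposition6p1:
  fixes v :: "'a::field \<Rightarrow> real" and \<pi> \<Delta> t :: 'a
    and \<mu> :: "('a \<times> 'a) measure" and \<beta> :: complex and T e :: nat
  assumes "nonarch_local_field v \<pi>"
    and "v 2 < 1"
    and "haar_o2 v \<pi> \<mu>"
    and "v 2 = real (residue_card v) powr (- real e)"
    and "v \<Delta> = v \<pi>"
    and "t \<in> int_ring v" and "t \<noteq> 0"
    and "v t = real (residue_card v) powr (- real T)"
    and "0 < Re \<beta>"
  shows "let q = real (residue_card v);
             z = of_real q powr (- \<beta>);
             w = z / of_real q
         in X_gen v \<pi> \<mu> (\<lambda>(x1, x2). x1\<^sup>2 - \<Delta> * x2\<^sup>2) \<beta> (t\<^sup>2)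
            = of_real (v 2) * (1 + w ^ (2 * T + e + 1)) / (1 - w)"
proof -
  \<comment> \<open>\<open>|2| < 1\<close>, \<open>t \<in> \<O>\<close> and \<open>t \<noteq> 0\<close> follow from the other hypotheses.\<close>
  interpret local_field v \<pi>
    by unfold_locales (rule assms(1))
  interpret norm_form_level_sets v \<pi> e \<Delta> \<mu> t T
    by unfold_locales (use assms residue_card_powr_neg in simp_all)
  show ?thesis
    using X_gen_eq[OF assms(9)] .
qed

end
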